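(* Under the standing assumptions below, suppose $3\sigma>2L$, $0<\gamma<\frac{3\sigma-2L}{L^2}$, and that $f+g$ is coercive, i.e. $\liminf_{\|u\|\to\infty}(f+g)(u)=\infty$. Then any sequence $\{(y^t,z^t,x^t)\}$ generated by the PR splitting iteration is bounded.
   Context: Standing assumptions: $f:\mathbb{R}^n\to\mathbb{R}$ is differentiable and strongly convex with modulus at least $\sigma>0$ (i.e. $f-\frac{\sigma}{2}\|\cdot\|^2$ is convex), and $\nabla f$ is Lipschitz continuous with modulus at most $L>0$. The function $g:\mathbb{R}^n\to(-\infty,\infty]$ is proper and lower semicontinuous, and for the $\gamma>0$ used, $\operatorname{Argmin}_u\{\gamma g(u)+\frac12\|u-w\|^2\}$ is nonempty for every $w\in\mathbb{R}^n$. PR splitting iteration: given $x^0$ and $\gamma>0$, for $t=0,1,2,\dots$: $y^{t+1}=\operatorname{argmin}_y\{f(y)+\frac{1}{2\gamma}\|y-x^t\|^2\}$; $z^{t+1}\in\operatorname{Argmin}_z\{g(z)+\frac{1}{2\gamma}\|2y^{t+1}-x^t-z\|^2\}$; $x^{t+1}=x^t+2(z^{t+1}-y^{t+1})$. *)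

theory Defs
  imports "HOL-Analysis.Analysis"
begin

definition lsc :: "('a::topological_space \<Rightarrow> ereal) \<Rightarrow> bool" where
  "lsc g \<longleftrightarrow> (\<forall>x. g x \<le> Liminf (at x) g)"

definition proper_fun :: "('a \<Rightarrow> ereal) \<Rightarrow> bool" where
  "proper_fun g \<longleftrightarrow> (\<forall>x. g x \<noteq> -\<infinity>) \<and> (\<exists>x. g x \<noteq> \<infinity>)"

definition is_minimizer :: "('a \<Rightarrow> 'b::linorder) \<Rightarrow> 'a \<Rightarrow> bool" where
  "is_minimizer h u \<longleftrightarrow> (\<forall>v. h u \<le> h v)"

end

theory Submission
  imports Defs
begin

text \<open>Along the iteration the Douglas--Rachford merit function
  M(t) = f(y(t+1)) + g(z(t+1)) + (|2 y(t+1) - x(t) - z(t+1)|^2 - |y(t+1) - x(t)|^2) / (2\<gamma>)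
  is nonincreasing.  The optimality condition of the y-step gives x(t) = y(t+1) + \<gamma> grad f(y(t+1)),
  and with it M(t+1) - M(t) is at most
  (\<gamma> |grad f(y(t+2)) - grad f(y(t+1))|^2 - \<sigma> |y(t+2) - y(t+1)|^2) / 2,
  which is nonpositive because \<gamma> L^2 < \<sigma> (the bound on \<gamma> together with \<sigma> \<le> L).
  By the descent lemma M(t) dominates (f + g)(z(t+1)) + (1/(2\<gamma>) - L/2) |z(t+1) - y(t+1)|^2.
  Coercivity then bounds z; as g has a quadratic minorant (from its proximal point at 0) and f is
  bounded on bounded sets, |z(t+1) - y(t+1)| is bounded too, and the bounds on y and x follow.\<close>

lemma norm_convex_combination_power2:
  fixes p q :: "'a::real_inner"
  shows "(norm ((1 - s) *\<^sub>R p + s *\<^sub>R q))\<^sup>2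
    = (1 - s) * (norm p)\<^sup>2 + s * (norm q)\<^sup>2 - s * (1 - s) * (norm (p - q))\<^sup>2"
  unfolding power2_norm_eq_inner by (simp add: inner_simps algebra_simps inner_commute)

lemma lipschitz_gradient_upper_bound:
  fixes f :: "'a::real_inner \<Rightarrow> real"
  assumes f_grad: "\<forall>u. (f has_derivative (\<lambda>h. gradf u \<bullet> h)) (at u)"
    and grad_lip: "\<forall>u v. norm (gradf u - gradf v) \<le> L * norm (u - v)"
  shows "f v \<le> f u + gradf u \<bullet> (v - u) + L / 2 * (norm (v - u))\<^sup>2"
proof -
  define d where "d = v - u"
  define \<phi> where "\<phi> s = f (u + s *\<^sub>R d) - s * (gradf u \<bullet> d) - L / 2 * s\<^sup>2 * (norm d)\<^sup>2" for s
  have line_deriv: "((\<lambda>s. f (u + s *\<^sub>R d)) has_real_derivative (gradf (u + s *\<^sub>R d) \<bullet> d)) (at s)"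
    for s
  proof -
    have "((\<lambda>s. u + s *\<^sub>R d) has_derivative (\<lambda>h. h *\<^sub>R d)) (at s)"
      by (auto intro!: derivative_eq_intros)
    from diff_chain_at[OF this f_grad[rule_format]] show ?thesis
      by (simp add: has_field_derivative_def o_def mult.commute[of _ "gradf _ \<bullet> d"])
  qed
  have \<phi>_deriv: "(\<phi> has_real_derivative
      ((gradf (u + s *\<^sub>R d) - gradf u) \<bullet> d - L * s * (norm d)\<^sup>2)) (at s)" for s
    unfolding \<phi>_def
    by (auto intro!: derivative_eq_intros line_deriv simp: power2_eq_square algebra_simps inner_diff_left)
  have "\<phi> 1 \<le> \<phi> 0"
  proof (rule DERIV_nonpos_imp_nonincreasing[of 0 1 \<phi>])
    fix s :: real assume s: "0 \<le> s" "s \<le> 1"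
    have "(gradf (u + s *\<^sub>R d) - gradf u) \<bullet> d \<le> norm (gradf (u + s *\<^sub>R d) - gradf u) * norm d"
      by (rule norm_cauchy_schwarz)
    also have "\<dots> \<le> L * norm (s *\<^sub>R d) * norm d"
      using grad_lip[rule_format, of "u + s *\<^sub>R d" u] by (simp add: mult_right_mono)
    also have "\<dots> = L * s * (norm d)\<^sup>2"
      using s by (simp add: power2_eq_square)
    finally show "\<exists>D. DERIV \<phi> s :> D \<and> D \<le> 0"
      using \<phi>_deriv by (intro exI conjI) auto
  qed simp
  then show ?thesis
    unfolding \<phi>_def d_def by simp
qed

definition strongly_convex :: "('a::real_inner \<Rightarrow> real) \<Rightarrow> real \<Rightarrow> bool" where
  "strongly_convex \<phi> \<mu> \<longleftrightarrow> (\<forall>p q s. 0 \<le> s \<longrightarrow> s \<le> 1 \<longrightarrow>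
     \<phi> ((1 - s) *\<^sub>R p + s *\<^sub>R q) \<le> (1 - s) * \<phi> p + s * \<phi> q - \<mu> / 2 * s * (1 - s) * (norm (p - q))\<^sup>2)"

lemma strongly_convexI_convex_on_minus_power2:
  assumes "convex_on UNIV (\<lambda>u. f u - \<sigma> / 2 * (norm u)\<^sup>2)"
  shows "strongly_convex f \<sigma>"
  unfolding strongly_convex_def
proof (intro allI impI)
  fix p q :: 'a and s :: real
  assume "0 \<le> s" "s \<le> 1"
  then have "f ((1 - s) *\<^sub>R p + s *\<^sub>R q) - \<sigma> / 2 * (norm ((1 - s) *\<^sub>R p + s *\<^sub>R q))\<^sup>2
      \<le> (1 - s) * (f p - \<sigma> / 2 * (norm p)\<^sup>2) + s * (f q - \<sigma> / 2 * (norm q)\<^sup>2)"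
    using convex_onD[OF assms, of s p q] by simp
  moreover have "(1 - s) * (f p - \<sigma> / 2 * (norm p)\<^sup>2) + s * (f q - \<sigma> / 2 * (norm q)\<^sup>2)
      + \<sigma> / 2 * (norm ((1 - s) *\<^sub>R p + s *\<^sub>R q))\<^sup>2
      = (1 - s) * f p + s * f q - \<sigma> / 2 * s * (1 - s) * (norm (p - q))\<^sup>2"
    unfolding norm_convex_combination_power2 by (simp add: field_simps)
  ultimately show "f ((1 - s) *\<^sub>R p + s *\<^sub>R q)
      \<le> (1 - s) * f p + s * f q - \<sigma> / 2 * s * (1 - s) * (norm (p - q))\<^sup>2"
    by linarith
qed

lemma strongly_convex_norm_diff_power2:
  "strongly_convex (\<lambda>v. (norm (v - w))\<^sup>2 / (2 * \<gamma>)) (1 / \<gamma>)"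
  unfolding strongly_convex_def
proof (intro allI impI)
  fix p q :: 'a and s :: real
  have shift: "(1 - s) *\<^sub>R p + s *\<^sub>R q - w = (1 - s) *\<^sub>R (p - w) + s *\<^sub>R (q - w)"
    by (simp add: algebra_simps)
  have "(norm ((1 - s) *\<^sub>R p + s *\<^sub>R q - w))\<^sup>2 / (2 * \<gamma>)
      = (1 - s) * ((norm (p - w))\<^sup>2 / (2 * \<gamma>)) + s * ((norm (q - w))\<^sup>2 / (2 * \<gamma>))
         - (1 / \<gamma>) / 2 * s * (1 - s) * (norm (p - q))\<^sup>2"
    unfolding shift norm_convex_combination_power2
    by (cases "\<gamma> = 0") (simp_all add: field_simps)
  then show "(norm ((1 - s) *\<^sub>R p + s *\<^sub>R q - w))\<^sup>2 / (2 * \<gamma>)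
      \<le> (1 - s) * ((norm (p - w))\<^sup>2 / (2 * \<gamma>)) + s * ((norm (q - w))\<^sup>2 / (2 * \<gamma>))
         - (1 / \<gamma>) / 2 * s * (1 - s) * (norm (p - q))\<^sup>2"
    by simp
qed

lemma strongly_convex_add:
  assumes "strongly_convex \<phi> \<mu>" and "strongly_convex \<psi> \<nu>"
  shows "strongly_convex (\<lambda>v. \<phi> v + \<psi> v) (\<mu> + \<nu>)"
  unfolding strongly_convex_def
proof (intro allI impI)
  fix p q :: 'a and s :: real
  assume s: "0 \<le> s" "s \<le> 1"
  show "\<phi> ((1 - s) *\<^sub>R p + s *\<^sub>R q) + \<psi> ((1 - s) *\<^sub>R p + s *\<^sub>R q)
      \<le> (1 - s) * (\<phi> p + \<psi> p) + s * (\<phi> q + \<psi> q) - (\<mu> + \<nu>) / 2 * s * (1 - s) * (norm (p - q))\<^sup>2"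
    using assms[unfolded strongly_convex_def, rule_format, OF s, of p q]
    by (simp add: algebra_simps add_divide_distrib)
qed

lemma strongly_convex_minimizer_growth:
  assumes "strongly_convex \<phi> \<mu>" and "is_minimizer \<phi> m"
  shows "\<phi> m + \<mu> / 2 * (norm (v - m))\<^sup>2 \<le> \<phi> v"
proof -
  have "\<mu> / 2 * (norm (v - m))\<^sup>2 \<le> \<phi> v - \<phi> m"
  proof (rule field_le_mult_one_interval)
    fix r :: real
    assume r: "0 < r" "r < 1"
    define s where "s = 1 - r"
    have s: "0 < s" "s \<le> 1"
      using r by (auto simp: s_def)
    have "\<phi> m \<le> \<phi> ((1 - s) *\<^sub>R m + s *\<^sub>R v)"
      using assms(2) by (simp add: is_minimizer_def)
    also have "\<dots> \<le> (1 - s) * \<phi> m + s * \<phi> v - \<mu> / 2 * s * (1 - s) * (norm (m - v))\<^sup>2"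
      using assms(1) s unfolding strongly_convex_def by auto
    finally have "s * (\<mu> / 2 * (1 - s) * (norm (m - v))\<^sup>2) \<le> s * (\<phi> v - \<phi> m)"
      by (simp add: algebra_simps)
    with s have "\<mu> / 2 * (1 - s) * (norm (m - v))\<^sup>2 \<le> \<phi> v - \<phi> m"
      by simp
    then show "r * (\<mu> / 2 * (norm (v - m))\<^sup>2) \<le> \<phi> v - \<phi> m"
      by (simp add: s_def norm_minus_commute algebra_simps)
  qed
  then show ?thesis by simp
qed

lemma strong_convexity_modulus_le_lipschitz:
  fixes f :: "'a::euclidean_space \<Rightarrow> real"
  assumes f_grad: "\<forall>u. (f has_derivative (\<lambda>h. gradf u \<bullet> h)) (at u)"
    and grad_lip: "\<forall>u v. norm (gradf u - gradf v) \<le> L * norm (u - v)"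
    and "strongly_convex f \<sigma>"
  shows "\<sigma> \<le> L"
proof -
  obtain e :: 'a where e: "norm e = 1"
    using norm_Basis nonempty_Basis by blast
  have "norm (e - - e) = 2"
    using e by (simp add: scaleR_2[symmetric])
  moreover have "f ((1 - 1 / 2) *\<^sub>R e + (1 / 2) *\<^sub>R - e)
      \<le> (1 - 1 / 2) * f e + 1 / 2 * f (- e) - \<sigma> / 2 * (1 / 2) * (1 - 1 / 2) * (norm (e - - e))\<^sup>2"
    using assms(3) unfolding strongly_convex_def by (elim allE[of _ e] allE[of _ "- e"] allE[of _ "1 / 2"]) simp
  moreover have "f e \<le> f 0 + gradf 0 \<bullet> e + L / 2"
    using lipschitz_gradient_upper_bound[OF f_grad grad_lip, of e 0] e by simp
  moreover have "f (- e) \<le> f 0 - gradf 0 \<bullet> e + L / 2"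
    using lipschitz_gradient_upper_bound[OF f_grad grad_lip, of "- e" 0] e by simp
  ultimately show ?thesis
    by (simp add: algebra_simps)
qed

lemma prox_first_order_condition:
  fixes f :: "'a::real_inner \<Rightarrow> real"
  assumes f_grad: "\<forall>u. (f has_derivative (\<lambda>h. gradf u \<bullet> h)) (at u)"
    and "\<gamma> > 0"
    and "is_minimizer (\<lambda>v. f v + (norm (v - w))\<^sup>2 / (2 * \<gamma>)) a"
  shows "w = a + \<gamma> *\<^sub>R gradf a"
proof -
  have "((\<lambda>v. f v + ((v - w) \<bullet> (v - w)) / (2 * \<gamma>)) has_derivative
      (\<lambda>h. gradf a \<bullet> h + (h \<bullet> (a - w) + (a - w) \<bullet> h) / (2 * \<gamma>))) (at a)"
    using f_grad \<open>\<gamma> > 0\<close> by (auto intro!: derivative_eq_intros simp: fun_eq_iff field_simps)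
  then have deriv: "((\<lambda>v. f v + (norm (v - w))\<^sup>2 / (2 * \<gamma>)) has_derivative
      (\<lambda>h. gradf a \<bullet> h + ((a - w) \<bullet> h) / \<gamma>)) (at a)"
    unfolding power2_norm_eq_inner using \<open>\<gamma> > 0\<close> by (simp add: inner_commute field_simps)
  have "(\<lambda>h. gradf a \<bullet> h + ((a - w) \<bullet> h) / \<gamma>) = (\<lambda>h. 0)"
    by (rule differential_zero_maxmin[OF _ open_UNIV deriv])
      (use assms(3) in \<open>auto simp: is_minimizer_def\<close>)
  then have "gradf a \<bullet> k + ((a - w) \<bullet> k) / \<gamma> = 0" for k
    by metis
  from this[of "\<gamma> *\<^sub>R gradf a + (a - w)"]
  have "(\<gamma> *\<^sub>R gradf a + (a - w)) \<bullet> (\<gamma> *\<^sub>R gradf a + (a - w)) = 0"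
    using \<open>\<gamma> > 0\<close> by (simp add: inner_simps field_simps inner_commute)
  then have "\<gamma> *\<^sub>R gradf a + (a - w) = 0"
    by simp
  then show ?thesis
    by (simp add: algebra_simps)
qed

lemma lipschitz_image_bounded:
  fixes h :: "'a::real_normed_vector \<Rightarrow> 'b::real_normed_vector"
  assumes "\<forall>u v. norm (h u - h v) \<le> L * norm (u - v)" and "bounded S"
  shows "bounded (h ` S)"
proof -
  obtain B where B: "\<forall>u\<in>S. norm u \<le> B"
    using \<open>bounded S\<close> unfolding bounded_iff by blast
  have "norm (h u) \<le> norm (h 0) + \<bar>L\<bar> * B" if "u \<in> S" for u
  proof -
    have "norm (h u) \<le> norm (h 0) + norm (h u - h 0)"
      by (metis add.commute norm_triangle_sub)
    also have "\<dots> \<le> norm (h 0) + \<bar>L\<bar> * norm u"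
      using assms(1)[rule_format, of u 0] mult_right_mono[OF abs_ge_self[of L] norm_ge_zero[of u]]
      by simp
    also have "\<dots> \<le> norm (h 0) + \<bar>L\<bar> * B"
      using B that by (simp add: mult_left_mono)
    finally show ?thesis .
  qed
  then show ?thesis
    unfolding bounded_iff by blast
qed

lemma coercive_sublevel_bounded:
  fixes F :: "'a::real_normed_vector \<Rightarrow> ereal"
  assumes "(F \<longlongrightarrow> \<infinity>) at_infinity"
  shows "\<exists>R. \<forall>u. F u \<le> ereal K \<longrightarrow> norm u < R"
proof -
  have "\<forall>\<^sub>F u in at_infinity. ereal K < F u"
    using assms by (simp add: tendsto_PInfty)
  then obtain R where "\<And>u. R \<le> norm u \<Longrightarrow> ereal K < F u"
    unfolding eventually_at_infinity by blast
  then show ?thesis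
    by (meson leD not_le)
qed

lemma prox_quadratic_minorant:
  fixes g :: "'a::real_normed_vector \<Rightarrow> ereal"
  assumes "proper_fun g" and "\<gamma> > 0"
    and "is_minimizer (\<lambda>v. ereal \<gamma> * g v + ereal ((norm (v - w))\<^sup>2 / 2)) u"
  shows "\<exists>m. \<forall>v. ereal m \<le> ereal \<gamma> * g v + ereal ((norm (v - w))\<^sup>2 / 2)"
proof -
  obtain p where "g p \<noteq> \<infinity>"
    using assms(1) unfolding proper_fun_def by blast
  moreover have "ereal \<gamma> * g u + ereal ((norm (u - w))\<^sup>2 / 2)
      \<le> ereal \<gamma> * g p + ereal ((norm (p - w))\<^sup>2 / 2)"
    using assms(3) unfolding is_minimizer_def by blast
  moreover have "g u \<noteq> - \<infinity>" "g p \<noteq> - \<infinity>"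
    using assms(1) unfolding proper_fun_def by blast+
  ultimately obtain r where "g u = ereal r"
    using \<open>\<gamma> > 0\<close> by (cases "g u"; cases "g p") auto
  then show ?thesis
    using assms(3) unfolding is_minimizer_def by (intro exI[of _ "\<gamma> * r + (norm (u - w))\<^sup>2 / 2"]) simp
qed

text \<open>The quadratic terms of M(t+1) - M(t), with a = y(t+1), a' = y(t+2), b = z(t+1),
  w = x(t), w' = x(t+1) and p, p' the gradients of f at a, a'.\<close>
lemma pr_step_identity:
  fixes a a' p p' :: "'a::real_inner"
  assumes "w = a + \<gamma> *\<^sub>R p" "w' = a' + \<gamma> *\<^sub>R p'" "w' = w + 2 *\<^sub>R (b - a)"
  shows "(norm (a - w'))\<^sup>2 - 2 * (norm (a' - w'))\<^sup>2 + (norm (2 *\<^sub>R a' - w' - b))\<^sup>2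
      - (norm (2 *\<^sub>R a - w - b))\<^sup>2 + (norm (a - w))\<^sup>2
    = (norm (a' - a))\<^sup>2 + \<gamma>\<^sup>2 * (norm (p' - p))\<^sup>2"
proof -
  have b: "b = a + (1 / 2) *\<^sub>R (w' - w)"
    using assms(3) by simp
  show ?thesis
    unfolding power2_norm_eq_inner b unfolding assms(1,2)
    by (simp add: inner_simps algebra_simps power2_eq_square)
qed

lemma bounded_range_from_Suc:
  "bounded (range (\<lambda>t. h (Suc t))) \<Longrightarrow> bounded (range h)"
  by (subst UNIV_nat_eq) (simp add: image_comp)

locale pr_splitting =
  fixes f :: "'a::euclidean_space \<Rightarrow> real" and gradf :: "'a \<Rightarrow> 'a" and g :: "'a \<Rightarrow> ereal"
    and \<sigma> L \<gamma> :: real and x y z :: "nat \<Rightarrow> 'a"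
  assumes f_grad: "\<forall>u. (f has_derivative (\<lambda>h. gradf u \<bullet> h)) (at u)"
    and grad_lip: "\<forall>u v. norm (gradf u - gradf v) \<le> L * norm (u - v)"
    and f_strongly_convex: "strongly_convex f \<sigma>"
    and g_proper: "proper_fun g"
    and \<gamma>_pos: "0 < \<gamma>"
    and y_step: "\<forall>t. is_minimizer (\<lambda>v. f v + (norm (v - x t))\<^sup>2 / (2 * \<gamma>)) (y (Suc t))"
    and z_step: "\<forall>t. is_minimizer
      (\<lambda>v. g v + ereal ((norm (2 *\<^sub>R y (Suc t) - x t - v))\<^sup>2 / (2 * \<gamma>))) (z (Suc t))"
    and x_step: "\<forall>t. x (Suc t) = x t + 2 *\<^sub>R (z (Suc t) - y (Suc t))"
begin

lemma x_eq_prox_gradient: "x t = y (Suc t) + \<gamma> *\<^sub>R gradf (y (Suc t))"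
  using prox_first_order_condition[OF f_grad \<gamma>_pos] y_step by blast

lemma y_step_growth:
  "f (y (Suc t)) + (norm (y (Suc t) - x t))\<^sup>2 / (2 * \<gamma>) + (\<sigma> + 1 / \<gamma>) / 2 * (norm (v - y (Suc t)))\<^sup>2
    \<le> f v + (norm (v - x t))\<^sup>2 / (2 * \<gamma>)"
  using strongly_convex_minimizer_growth[OF strongly_convex_add[OF f_strongly_convex
      strongly_convex_norm_diff_power2]] y_step
  by blast

lemma g_z_finite: "\<bar>g (z (Suc t))\<bar> \<noteq> \<infinity>"
proof -
  obtain p where "g p \<noteq> \<infinity>"
    using g_proper unfolding proper_fun_def by blast
  moreover have "g (z (Suc t)) + ereal ((norm (2 *\<^sub>R y (Suc t) - x t - z (Suc t)))\<^sup>2 / (2 * \<gamma>))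
      \<le> g p + ereal ((norm (2 *\<^sub>R y (Suc t) - x t - p))\<^sup>2 / (2 * \<gamma>))"
    using z_step unfolding is_minimizer_def by blast
  moreover have "g (z (Suc t)) \<noteq> - \<infinity>"
    using g_proper unfolding proper_fun_def by blast
  ultimately show ?thesis
    by (cases "g (z (Suc t))"; cases "g p") auto
qed

lemma ereal_real_g_z: "ereal (real_of_ereal (g (z (Suc t)))) = g (z (Suc t))"
  using g_z_finite by (rule ereal_real')

lemma z_step_real:
  assumes "\<bar>g v\<bar> \<noteq> \<infinity>"
  shows "real_of_ereal (g (z (Suc t))) + (norm (2 *\<^sub>R y (Suc t) - x t - z (Suc t)))\<^sup>2 / (2 * \<gamma>)
    \<le> real_of_ereal (g v) + (norm (2 *\<^sub>R y (Suc t) - x t - v))\<^sup>2 / (2 * \<gamma>)"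
proof -
  have "g (z (Suc t)) + ereal ((norm (2 *\<^sub>R y (Suc t) - x t - z (Suc t)))\<^sup>2 / (2 * \<gamma>))
      \<le> g v + ereal ((norm (2 *\<^sub>R y (Suc t) - x t - v))\<^sup>2 / (2 * \<gamma>))"
    using z_step unfolding is_minimizer_def by blast
  moreover have "g (z (Suc t)) = ereal (real_of_ereal (g (z (Suc t))))" "g v = ereal (real_of_ereal (g v))"
    using g_z_finite[of t] assms by (simp_all add: ereal_real')
  ultimately show ?thesis
    by (metis ereal_less_eq(3) plus_ereal.simps(1))
qed

definition merit :: "nat \<Rightarrow> real" where
  "merit t = f (y (Suc t)) + real_of_ereal (g (z (Suc t)))
    + ((norm (2 *\<^sub>R y (Suc t) - x t - z (Suc t)))\<^sup>2 - (norm (y (Suc t) - x t))\<^sup>2) / (2 * \<gamma>)"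

lemma decseq_merit:
  assumes "\<gamma> * L\<^sup>2 \<le> \<sigma>"
  shows "decseq merit"
proof (rule decseq_SucI)
  fix t
  let ?a = "y (Suc t)" and ?a' = "y (Suc (Suc t))" and ?w = "x t" and ?w' = "x (Suc t)"
    and ?b = "z (Suc t)" and ?b' = "z (Suc (Suc t))"
  have identity: "(norm (?a - ?w'))\<^sup>2 - 2 * (norm (?a' - ?w'))\<^sup>2 + (norm (2 *\<^sub>R ?a' - ?w' - ?b))\<^sup>2
      - (norm (2 *\<^sub>R ?a - ?w - ?b))\<^sup>2 + (norm (?a - ?w))\<^sup>2
    = (norm (?a' - ?a))\<^sup>2 + \<gamma>\<^sup>2 * (norm (gradf ?a' - gradf ?a))\<^sup>2"
    using x_step by (intro pr_step_identity x_eq_prox_gradient) simp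
  have "(norm (gradf ?a' - gradf ?a))\<^sup>2 \<le> (L * norm (?a' - ?a))\<^sup>2"
    using grad_lip by (meson norm_ge_zero power_mono)
  then have "\<gamma> * (norm (gradf ?a' - gradf ?a))\<^sup>2 \<le> \<gamma> * L\<^sup>2 * (norm (?a' - ?a))\<^sup>2"
    using \<gamma>_pos by (simp add: power_mult_distrib mult.assoc)
  also have "\<dots> \<le> \<sigma> * (norm (?a' - ?a))\<^sup>2"
    using assms by (simp add: mult_right_mono)
  finally have gradient_step: "\<gamma> * (norm (gradf ?a' - gradf ?a))\<^sup>2 \<le> \<sigma> * (norm (?a' - ?a))\<^sup>2" .
  have "merit (Suc t) - merit t
      \<le> ((norm (?a - ?w'))\<^sup>2 - 2 * (norm (?a' - ?w'))\<^sup>2 + (norm (2 *\<^sub>R ?a' - ?w' - ?b))\<^sup>2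
        - (norm (2 *\<^sub>R ?a - ?w - ?b))\<^sup>2 + (norm (?a - ?w))\<^sup>2) / (2 * \<gamma>)
        - (\<sigma> + 1 / \<gamma>) / 2 * (norm (?a - ?a'))\<^sup>2"
    using y_step_growth[of "Suc t" ?a] z_step_real[OF g_z_finite, of "Suc t" t]
    unfolding merit_def by (simp add: diff_divide_distrib add_divide_distrib)
  also have "\<dots> = (\<gamma> * (norm (gradf ?a' - gradf ?a))\<^sup>2 - \<sigma> * (norm (?a' - ?a))\<^sup>2) / 2"
    unfolding identity using \<gamma>_pos by (simp add: norm_minus_commute field_simps power2_eq_square)
  also have "\<dots> \<le> 0"
    using gradient_step by simp
  finally show "merit (Suc t) \<le> merit t"
    by simp
qed

lemma merit_lower_bound:
  "f (z (Suc t)) + real_of_ereal (g (z (Suc t))) + (1 / (2 * \<gamma>) - L / 2) * (norm (z (Suc t) - y (Suc t)))\<^sup>2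
    \<le> merit t"
proof -
  let ?a = "y (Suc t)" and ?b = "z (Suc t)"
  have "(norm (2 *\<^sub>R ?a - x t - ?b))\<^sup>2 - (norm (?a - x t))\<^sup>2
      = (norm (?b - ?a))\<^sup>2 + 2 * \<gamma> * (gradf ?a \<bullet> (?b - ?a))"
    unfolding power2_norm_eq_inner x_eq_prox_gradient[of t]
    by (simp add: inner_simps algebra_simps inner_commute)
  then have "merit t
      = f ?a + real_of_ereal (g ?b) + (norm (?b - ?a))\<^sup>2 / (2 * \<gamma>) + gradf ?a \<bullet> (?b - ?a)"
    unfolding merit_def using \<gamma>_pos by (simp add: add_divide_distrib)
  moreover have "f ?b \<le> f ?a + gradf ?a \<bullet> (?b - ?a) + L / 2 * (norm (?b - ?a))\<^sup>2"
    by (rule lipschitz_gradient_upper_bound[OF f_grad grad_lip])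
  ultimately show ?thesis
    by (simp add: algebra_simps diff_divide_distrib)
qed

lemma bounded_z:
  assumes "\<gamma> * L\<^sup>2 \<le> \<sigma>" and "\<gamma> * L \<le> 1"
    and coercive: "((\<lambda>u. ereal (f u) + g u) \<longlongrightarrow> \<infinity>) at_infinity"
  shows "bounded (range (\<lambda>t. z (Suc t)))"
proof -
  obtain R where R: "\<forall>u. ereal (f u) + g u \<le> ereal (merit 0) \<longrightarrow> norm u < R"
    using coercive_sublevel_bounded[OF coercive] by blast
  have c_nonneg: "0 \<le> 1 / (2 * \<gamma>) - L / 2"
    using assms(2) \<gamma>_pos by (simp add: field_simps)
  have "f (z (Suc t)) + real_of_ereal (g (z (Suc t))) \<le> merit 0" for t
    using mult_nonneg_nonneg[OF c_nonneg zero_le_power2[of "norm (z (Suc t) - y (Suc t))"]]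
      merit_lower_bound[of t] decseqD[OF decseq_merit[OF assms(1)] le0[of t]]
    by linarith
  then have "ereal (f (z (Suc t))) + g (z (Suc t)) \<le> ereal (merit 0)" for t
    by (metis ereal_real_g_z ereal_less_eq(3) plus_ereal.simps(1))
  with R have "norm (z (Suc t)) \<le> R" for t
    by (simp add: less_imp_le)
  then show ?thesis
    unfolding bounded_iff by blast
qed

lemma bounded_z_minus_y:
  assumes "\<gamma> * L\<^sup>2 \<le> \<sigma>" and "\<gamma> * L < 1"
    and coercive: "((\<lambda>u. ereal (f u) + g u) \<longlongrightarrow> \<infinity>) at_infinity"
    and prox_ex: "\<forall>w. \<exists>u. is_minimizer (\<lambda>v. ereal \<gamma> * g v + ereal ((norm (v - w))\<^sup>2 / 2)) u"
  shows "bounded (range (\<lambda>t. z (Suc t) - y (Suc t)))"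
proof -
  obtain R where R: "\<And>t. norm (z (Suc t)) \<le> R"
    using bounded_z[OF assms(1) less_imp_le[OF assms(2)] coercive] unfolding bounded_iff by blast
  obtain m where m: "\<forall>v. ereal m \<le> ereal \<gamma> * g v + ereal ((norm (v - 0))\<^sup>2 / 2)"
    using prox_ex prox_quadratic_minorant[OF g_proper \<gamma>_pos] by blast
  have g_lower: "(m - R\<^sup>2 / 2) / \<gamma> \<le> real_of_ereal (g (z (Suc t)))" for t
  proof -
    obtain r where r: "g (z (Suc t)) = ereal r"
      using g_z_finite[of t] by (cases "g (z (Suc t))") auto
    have "m \<le> \<gamma> * real_of_ereal (g (z (Suc t))) + (norm (z (Suc t)))\<^sup>2 / 2"
      using m[rule_format, of "z (Suc t)"] by (simp add: r)
    moreover have "(norm (z (Suc t)))\<^sup>2 \<le> R\<^sup>2"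
      using R[of t] by (intro power_mono) simp_all
    ultimately have "m - R\<^sup>2 / 2 \<le> \<gamma> * real_of_ereal (g (z (Suc t)))"
      by linarith
    then show ?thesis
      using \<gamma>_pos by (simp add: pos_divide_le_eq mult.commute)
  qed
  have "continuous_on (cball 0 R) f"
    using f_grad by (meson has_derivative_continuous continuous_at_imp_continuous_on)
  then have "bounded (f ` cball 0 R)"
    by (intro compact_imp_bounded compact_continuous_image compact_cball)
  then obtain B where B: "\<forall>v\<in>f ` cball 0 R. norm v \<le> B"
    unfolding bounded_iff by blast
  have f_lower: "- B \<le> f (z (Suc t))" for t
    using B[rule_format, OF imageI[of "z (Suc t)"]] R[of t] by (simp add: abs_le_iff)
  define c where "c = 1 / (2 * \<gamma>) - L / 2"
  have "c > 0"
    using assms(2) \<gamma>_pos unfolding c_def by (simp add: field_simps)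
  have "c * (norm (z (Suc t) - y (Suc t)))\<^sup>2 \<le> merit 0 + B - (m - R\<^sup>2 / 2) / \<gamma>" for t
    using merit_lower_bound[of t] decseqD[OF decseq_merit[OF assms(1)] le0[of t]] f_lower[of t] g_lower[of t]
    unfolding c_def by linarith
  then have "norm (z (Suc t) - y (Suc t)) \<le> sqrt ((merit 0 + B - (m - R\<^sup>2 / 2) / \<gamma>) / c)" for t
    using \<open>c > 0\<close> by (intro real_le_rsqrt) (simp add: field_simps)
  then show ?thesis
    unfolding bounded_iff by blast
qed

lemma bounded_iterates:
  assumes "\<gamma> * L\<^sup>2 \<le> \<sigma>" and "\<gamma> * L < 1"
    and coercive: "((\<lambda>u. ereal (f u) + g u) \<longlongrightarrow> \<infinity>) at_infinity"
    and prox_ex: "\<forall>w. \<exists>u. is_minimizer (\<lambda>v. ereal \<gamma> * g v + ereal ((norm (v - w))\<^sup>2 / 2)) u"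
  shows "bounded (range x) \<and> bounded (range y) \<and> bounded (range z)"
proof -
  have z_Suc: "bounded (range (\<lambda>t. z (Suc t)))"
    using bounded_z[OF assms(1) less_imp_le[OF assms(2)] coercive] .
  have y_Suc: "bounded (range (\<lambda>t. y (Suc t)))"
    using bounded_minus_comp[OF z_Suc bounded_z_minus_y[OF assms]] by simp
  have "bounded (range (\<lambda>t. \<gamma> *\<^sub>R gradf (y (Suc t))))"
    using bounded_scaling[OF lipschitz_image_bounded[OF grad_lip y_Suc], of \<gamma>]
    by (simp add: image_comp o_def)
  then have "bounded (range (\<lambda>t. y (Suc t) + \<gamma> *\<^sub>R gradf (y (Suc t))))"
    by (rule bounded_plus_comp[OF y_Suc])
  then have "bounded (range x)"
    unfolding x_eq_prox_gradient[abs_def, symmetric] by simp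
  with z_Suc y_Suc show ?thesis
    by (simp add: bounded_range_from_Suc)
qed

end

theorem theorem2:
  fixes f :: "'a::euclidean_space \<Rightarrow> real"
    and gradf :: "'a \<Rightarrow> 'a"
    and g :: "'a \<Rightarrow> ereal"
    and \<sigma> L \<gamma> :: real
    and x y z :: "nat \<Rightarrow> 'a"
  assumes f_grad: "\<forall>u. (f has_derivative (\<lambda>h. gradf u \<bullet> h)) (at u)"
    and \<sigma>_pos: "\<sigma> > 0"
    and f_strong: "convex_on UNIV (\<lambda>u. f u - \<sigma> / 2 * (norm u)\<^sup>2)"
    and L_pos: "L > 0"
    and grad_lip: "\<forall>u v. norm (gradf u - gradf v) \<le> L * norm (u - v)"
    and g_proper: "proper_fun g"
    and g_lsc: "lsc g"
    and prox_ex: "\<forall>w. \<exists>u. is_minimizer (\<lambda>v. ereal \<gamma> * g v + ereal ((norm (v - w))\<^sup>2 / 2)) u"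
    and cond: "3 * \<sigma> > 2 * L"
    and \<gamma>_pos: "0 < \<gamma>"
    and \<gamma>_bound: "\<gamma> < (3 * \<sigma> - 2 * L) / L\<^sup>2"
    and coercive: "((\<lambda>u. ereal (f u) + g u) \<longlongrightarrow> \<infinity>) at_infinity"
    and y_step: "\<forall>t. is_minimizer (\<lambda>v. f v + (norm (v - x t))\<^sup>2 / (2 * \<gamma>)) (y (Suc t))"
    and z_step: "\<forall>t. is_minimizer
                    (\<lambda>v. g v + ereal ((norm (2 *\<^sub>R y (Suc t) - x t - v))\<^sup>2 / (2 * \<gamma>))) (z (Suc t))"
    and x_step: "\<forall>t. x (Suc t) = x t + 2 *\<^sub>R (z (Suc t) - y (Suc t))"
  shows "bounded (range x) \<and> bounded (range y) \<and> bounded (range z)"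
proof -
  have f_strongly_convex: "strongly_convex f \<sigma>"
    by (rule strongly_convexI_convex_on_minus_power2[OF f_strong])
  have "\<sigma> \<le> L"
    by (rule strong_convexity_modulus_le_lipschitz[OF f_grad grad_lip f_strongly_convex])
  moreover have "\<gamma> * L\<^sup>2 < 3 * \<sigma> - 2 * L"
    using \<gamma>_bound L_pos by (simp add: field_simps)
  ultimately have "\<gamma> * L\<^sup>2 < \<sigma>"
    by linarith
  with \<open>\<sigma> \<le> L\<close> have "(\<gamma> * L) * L < 1 * L"
    by (simp add: power2_eq_square mult.assoc)
  then have "\<gamma> * L < 1"
    using L_pos by simp
  interpret pr_splitting f gradf g \<sigma> L \<gamma> x y z
    using f_grad grad_lip f_strongly_convex g_proper \<gamma>_pos y_step z_step x_step
    by unfold_locales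
  show ?thesis
    by (rule bounded_iterates[OF less_imp_le[OF \<open>\<gamma> * L\<^sup>2 < \<sigma>\<close>] \<open>\<gamma> * L < 1\<close> coercive prox_ex])
qed

end
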